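(* Either $\liminf_{n\to\infty}\operatorname{Var}(S_n)/n^2>0$, or $\operatorname{Var}(S_n)/n^2\to0$ as $n\to\infty$.
   Context: Let $X_1,X_2,\ldots$ be a sequence of centred, weakly stationary, real random variables with finite second moments, and $S_n=X_1+\cdots+X_n$. *)

theory Defs
  imports "HOL-Probability.Probability"
begin

end

theory Submission
  imports Defs
begin

text \<open>
  Let \<open>S\<^sub>n = X\<^sub>1 + \<dots> + X\<^sub>n\<close> for a centred, weakly stationary sequence in \<open>L\<^sup>2\<close>,
  and \<open>V(n) = E[S\<^sub>n\<^sup>2] = Var(S\<^sub>n)\<close>.  By stationarity, every block of \<open>m\<close>
  consecutive variables has second moment \<open>V(m)\<close>.  Writing \<open>n = q m + r\<close> with
  \<open>r < m\<close>, splitting \<open>S\<^sub>n\<close> into \<open>q\<close> such blocks plus a remainder of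
  \<open>r\<close> variables, and using \<open>(a + b)\<^sup>2 \<le> (1 + \<epsilon>) a\<^sup>2 + (1 + 1/\<epsilon>) b\<^sup>2\<close>
  and Cauchy-Schwarz for finite sums, one obtains
    \<open>V(n) \<le> (1 + \<epsilon>) q\<^sup>2 V(m) + (1 + 1/\<epsilon>) r\<^sup>2 V(1)\<close>.
  Dividing by \<open>n\<^sup>2\<close> shows that \<open>v(n) = V(n)/n\<^sup>2\<close> is eventually at most
  \<open>v(m) + d\<close> for every fixed \<open>m\<close> and \<open>d > 0\<close>.  Hence if \<open>v\<close> comes
  arbitrarily close to \<open>0\<close> once, it stays close to \<open>0\<close>: either
  \<open>liminf v > 0\<close> or \<open>v \<longrightarrow> 0\<close>.
\<close>

lemma square_sum_le_card_sum_squares: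
  fixes f :: "'b \<Rightarrow> real"
  shows "(\<Sum>j\<in>A. f j)\<^sup>2 \<le> real (card A) * (\<Sum>j\<in>A. (f j)\<^sup>2)"
  using Cauchy_Schwarz_ineq_sum[of "\<lambda>_. 1" f A] by simp

lemma square_add_le_weighted:
  fixes a b e :: real
  assumes "e > 0"
  shows "(a + b)\<^sup>2 \<le> (1 + e) * a\<^sup>2 + (1 + 1/e) * b\<^sup>2"
proof -
  have "0 \<le> (e*a - b)\<^sup>2 / e" using assms by simp
  also have "\<dots> = e*a\<^sup>2 - 2*a*b + b\<^sup>2/e" using assms
    by (simp add: power2_eq_square field_simps)
  finally show ?thesis by (simp add: power2_eq_square field_simps)
qed

lemma sum_by_blocks:
  fixes f :: "nat \<Rightarrow> 'b::comm_monoid_add"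
  shows "(\<Sum>i=1..q*m. f i) = (\<Sum>j<q. \<Sum>i=j*m+1..j*m+m. f i)"
proof (induction q)
  case 0 then show ?case by simp
next
  case (Suc q)
  have "(\<Sum>i=1..Suc q*m. f i) = (\<Sum>i=1..q*m + m. f i)" by (simp add: add.commute)
  also have "\<dots> = (\<Sum>i=1..q*m. f i) + (\<Sum>i=q*m+1..q*m+m. f i)"
    by (rule sum.ub_add_nat) simp
  finally show ?case using Suc by simp
qed

lemma normalised_eventually_le:
  fixes V :: "nat \<Rightarrow> real" and C :: real
  assumes V_nonneg: "\<And>n. V n \<ge> 0" and "C \<ge> 0"
    and block: "\<And>n m e. m \<ge> 1 \<Longrightarrow> e > 0 \<Longrightarrow>
      V n \<le> (1 + e) * ((real (n div m))\<^sup>2 * V m) + (1 + 1/e) * ((real (n mod m))\<^sup>2 * C)"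
    and "m \<ge> 1" and "d > 0"
  shows "eventually (\<lambda>n. V n / (real n)\<^sup>2 \<le> V m / (real m)\<^sup>2 + d) sequentially"
proof -
  define v where "v = V m / (real m)\<^sup>2"
  have "v \<ge> 0" using V_nonneg by (simp add: v_def)
  define e where "e = d / (2 * (v + 1))"
  have e: "e > 0" using \<open>d > 0\<close> \<open>v \<ge> 0\<close> by (simp add: e_def)
  have ev: "e * v \<le> d / 2"
  proof -
    have "e * v = (d / 2) * (v / (v + 1))" using \<open>v \<ge> 0\<close> by (simp add: e_def field_simps)
    also have "\<dots> \<le> d / 2"
      using \<open>d > 0\<close> \<open>v \<ge> 0\<close> by (intro mult_left_le) simp_all
    finally show ?thesis .
  qed
  define K where "K = (1 + 1/e) * ((real m)\<^sup>2 * C)"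
  have "K \<ge> 0" using e \<open>C \<ge> 0\<close> by (simp add: K_def)
  have "(\<lambda>n. K / (real n)\<^sup>2) \<longlonglongrightarrow> 0"
    by (intro tendsto_divide_0[OF tendsto_const] filterlim_at_top_imp_at_infinity
        filterlim_pow_at_top filterlim_real_sequentially) simp
  then have "eventually (\<lambda>n. K / (real n)\<^sup>2 < d / 2) sequentially"
    using \<open>d > 0\<close> by (intro order_tendstoD(2)) auto
  moreover have "eventually (\<lambda>n. n \<ge> 1) sequentially"
    by (rule eventually_ge_at_top)
  ultimately show ?thesis
  proof eventually_elim
    case (elim n)
    then have n: "real n > 0" by simp
    have "real (n mod m) \<le> real m" using \<open>m \<ge> 1\<close> by (simp add: order.strict_implies_order)
    then have rest: "(1 + 1/e) * ((real (n mod m))\<^sup>2 * C) \<le> K"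
      unfolding K_def using e \<open>C \<ge> 0\<close> by (intro mult_left_mono mult_right_mono power_mono) auto
    have "real (n div m) * real m \<le> real n"
      by (metis div_times_less_eq_dividend of_nat_le_iff of_nat_mult)
    then have "(real (n div m) * real m)\<^sup>2 * v \<le> (real n)\<^sup>2 * v"
      using \<open>v \<ge> 0\<close> by (intro mult_right_mono power_mono) auto
    moreover have "(real (n div m))\<^sup>2 * V m = (real (n div m) * real m)\<^sup>2 * v"
      using \<open>m \<ge> 1\<close> by (simp add: v_def power_mult_distrib)
    ultimately have main: "(real (n div m))\<^sup>2 * V m \<le> (real n)\<^sup>2 * v" by simp
    have "V n \<le> (1 + e) * ((real n)\<^sup>2 * v) + K"
      using block[OF \<open>m \<ge> 1\<close> e, of n] rest main e
      by (smt (verit) mult_left_mono)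
    then have "V n / (real n)\<^sup>2 \<le> ((1 + e) * ((real n)\<^sup>2 * v) + K) / (real n)\<^sup>2"
      using n by (intro divide_right_mono) auto
    also have "\<dots> = v + e * v + K / (real n)\<^sup>2"
      using n by (simp add: field_simps)
    finally show ?case
      unfolding v_def[symmetric] using ev elim by linarith
  qed
qed

lemma nonneg_sequence_dichotomy:
  fixes v :: "nat \<Rightarrow> real"
  assumes nonneg: "\<And>n. v n \<ge> 0"
    and bound: "\<And>m d. m \<ge> 1 \<Longrightarrow> d > 0 \<Longrightarrow> eventually (\<lambda>n. v n \<le> v m + d) sequentially"
  shows "liminf (\<lambda>n. ereal (v n)) > 0 \<or> v \<longlonglongrightarrow> 0"
proof (cases "\<exists>\<delta>>0. eventually (\<lambda>n. \<delta> \<le> v n) sequentially")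
  case True
  then obtain \<delta> where "\<delta> > 0" and "eventually (\<lambda>n. ereal \<delta> \<le> ereal (v n)) sequentially"
    by auto
  then have "0 < ereal \<delta>" and "ereal \<delta> \<le> liminf (\<lambda>n. ereal (v n))"
    by (auto intro: Liminf_bounded)
  then show ?thesis by (blast intro: order.strict_trans2)
next
  case False
  have "v \<longlonglongrightarrow> 0"
  proof (rule LIMSEQ_I)
    fix r :: real assume "r > 0"
    then have "\<not> eventually (\<lambda>n. r / 2 \<le> v n) sequentially"
      using False half_gt_zero by blast
    then have "frequently (\<lambda>n. v n < r / 2) sequentially"
      by (simp add: frequently_def not_less)
    then obtain m where "m \<ge> 1" "v m < r / 2"
      unfolding frequently_sequentially by auto
    with bound[of m "r / 2"] \<open>r > 0\<close>
    have "eventually (\<lambda>n. norm (v n - 0) < r) sequentially"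
      by (auto elim!: eventually_mono simp: nonneg)
    then show "\<exists>N. \<forall>n\<ge>N. norm (v n - 0) < r"
      by (simp add: eventually_sequentially)
  qed
  then show ?thesis ..
qed

context prob_space
begin

definition square_integrable :: "('a \<Rightarrow> real) \<Rightarrow> bool" where
  "square_integrable f \<longleftrightarrow> f \<in> borel_measurable M \<and> integrable M (\<lambda>\<omega>. (f \<omega>)\<^sup>2)"

text \<open>Products of square-integrable variables are integrable (\<open>2|fg| \<le> f\<^sup>2 + g\<^sup>2\<close>).\<close>

lemma square_integrable_product:
  assumes "square_integrable f" "square_integrable g"
  shows "integrable M (\<lambda>\<omega>. f \<omega> * g \<omega>)"
proof (rule Bochner_Integration.integrable_bound)
  show "integrable M (\<lambda>\<omega>. (f \<omega>)\<^sup>2 + (g \<omega>)\<^sup>2)"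
    using assms unfolding square_integrable_def by auto
  show "(\<lambda>\<omega>. f \<omega> * g \<omega>) \<in> borel_measurable M"
    using assms unfolding square_integrable_def by auto
  have "\<bar>f \<omega> * g \<omega>\<bar> \<le> (f \<omega>)\<^sup>2 + (g \<omega>)\<^sup>2" for \<omega>
  proof -
    have "2 * \<bar>f \<omega>\<bar> * \<bar>g \<omega>\<bar> \<le> (f \<omega>)\<^sup>2 + (g \<omega>)\<^sup>2"
      using sum_squares_bound[of "\<bar>f \<omega>\<bar>" "\<bar>g \<omega>\<bar>"] by simp
    moreover have "0 \<le> \<bar>f \<omega>\<bar> * \<bar>g \<omega>\<bar>" by simp
    ultimately show ?thesis unfolding abs_mult by linarith
  qed
  then show "AE \<omega> in M. norm (f \<omega> * g \<omega>) \<le> norm ((f \<omega>)\<^sup>2 + (g \<omega>)\<^sup>2)"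
    by simp
qed

lemma square_integrable_sum:
  assumes "finite A" "\<And>j. j \<in> A \<Longrightarrow> square_integrable (f j)"
  shows "square_integrable (\<lambda>\<omega>. \<Sum>j\<in>A. f j \<omega>)"
  unfolding square_integrable_def
proof
  show meas: "(\<lambda>\<omega>. \<Sum>j\<in>A. f j \<omega>) \<in> borel_measurable M"
    using assms unfolding square_integrable_def by (intro borel_measurable_sum) auto
  show "integrable M (\<lambda>\<omega>. (\<Sum>j\<in>A. f j \<omega>)\<^sup>2)"
  proof (rule Bochner_Integration.integrable_bound)
    show "integrable M (\<lambda>\<omega>. real (card A) * (\<Sum>j\<in>A. (f j \<omega>)\<^sup>2))"
      using assms unfolding square_integrable_def by auto
    show "(\<lambda>\<omega>. (\<Sum>j\<in>A. f j \<omega>)\<^sup>2) \<in> borel_measurable M"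
      using meas by auto
    show "AE \<omega> in M. norm ((\<Sum>j\<in>A. f j \<omega>)\<^sup>2) \<le> norm (real (card A) * (\<Sum>j\<in>A. (f j \<omega>)\<^sup>2))"
      using square_sum_le_card_sum_squares[of "\<lambda>j. f j _" A] by (auto simp: sum_nonneg)
  qed
qed

lemma expectation_square_sum:
  assumes "finite A" "\<And>j. j \<in> A \<Longrightarrow> square_integrable (f j)"
  shows "expectation (\<lambda>\<omega>. (\<Sum>j\<in>A. f j \<omega>)\<^sup>2)
    = (\<Sum>i\<in>A. \<Sum>j\<in>A. expectation (\<lambda>\<omega>. f i \<omega> * f j \<omega>))"
proof -
  have "(\<lambda>\<omega>. (\<Sum>j\<in>A. f j \<omega>)\<^sup>2) = (\<lambda>\<omega>. \<Sum>i\<in>A. \<Sum>j\<in>A. f i \<omega> * f j \<omega>)"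
    by (simp add: power2_eq_square sum_product)
  then show ?thesis
    using assms by (simp add: Bochner_Integration.integrable_sum square_integrable_product)
qed

lemma expectation_square_sum_le:
  assumes "finite A" "\<And>j. j \<in> A \<Longrightarrow> square_integrable (f j)"
  shows "expectation (\<lambda>\<omega>. (\<Sum>j\<in>A. f j \<omega>)\<^sup>2)
    \<le> real (card A) * (\<Sum>j\<in>A. expectation (\<lambda>\<omega>. (f j \<omega>)\<^sup>2))"
proof -
  have "expectation (\<lambda>\<omega>. (\<Sum>j\<in>A. f j \<omega>)\<^sup>2)
      \<le> expectation (\<lambda>\<omega>. real (card A) * (\<Sum>j\<in>A. (f j \<omega>)\<^sup>2))"
  proof (rule integral_mono)
    show "integrable M (\<lambda>\<omega>. (\<Sum>j\<in>A. f j \<omega>)\<^sup>2)"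
      using square_integrable_sum[OF assms] unfolding square_integrable_def by simp
    show "integrable M (\<lambda>\<omega>. real (card A) * (\<Sum>j\<in>A. (f j \<omega>)\<^sup>2))"
      using assms unfolding square_integrable_def by auto
  qed (rule square_sum_le_card_sum_squares)
  also have "\<dots> = real (card A) * (\<Sum>j\<in>A. expectation (\<lambda>\<omega>. (f j \<omega>)\<^sup>2))"
    using assms unfolding square_integrable_def by (simp add: Bochner_Integration.integral_sum)
  finally show ?thesis .
qed

lemma expectation_square_add_le:
  assumes "square_integrable f" "square_integrable g" "e > 0"
  shows "expectation (\<lambda>\<omega>. (f \<omega> + g \<omega>)\<^sup>2)
    \<le> (1 + e) * expectation (\<lambda>\<omega>. (f \<omega>)\<^sup>2) + (1 + 1/e) * expectation (\<lambda>\<omega>. (g \<omega>)\<^sup>2)"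
proof -
  have sum_sq: "square_integrable (\<lambda>\<omega>. f \<omega> + g \<omega>)"
    using square_integrable_sum[of "{True, False}" "\<lambda>b. if b then f else g"] assms by simp
  have "expectation (\<lambda>\<omega>. (f \<omega> + g \<omega>)\<^sup>2)
      \<le> expectation (\<lambda>\<omega>. (1 + e) * (f \<omega>)\<^sup>2 + (1 + 1/e) * (g \<omega>)\<^sup>2)"
  proof (rule integral_mono)
    show "integrable M (\<lambda>\<omega>. (f \<omega> + g \<omega>)\<^sup>2)"
      using sum_sq unfolding square_integrable_def by simp
    show "integrable M (\<lambda>\<omega>. (1 + e) * (f \<omega>)\<^sup>2 + (1 + 1/e) * (g \<omega>)\<^sup>2)"
      using assms unfolding square_integrable_def by auto
  qed (rule square_add_le_weighted[OF \<open>e > 0\<close>])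
  also have "\<dots> = (1 + e) * expectation (\<lambda>\<omega>. (f \<omega>)\<^sup>2) + (1 + 1/e) * expectation (\<lambda>\<omega>. (g \<omega>)\<^sup>2)"
    using assms unfolding square_integrable_def by simp
  finally show ?thesis .
qed

end

locale weakly_stationary = prob_space +
  fixes X :: "nat \<Rightarrow> 'a \<Rightarrow> real"
  assumes square_integrable_X: "\<And>i. i \<ge> 1 \<Longrightarrow> square_integrable (X i)"
    and stationary: "\<And>i j k. i \<ge> 1 \<Longrightarrow> j \<ge> 1 \<Longrightarrow>
      expectation (\<lambda>\<omega>. X (i + k) \<omega> * X (j + k) \<omega>) = expectation (\<lambda>\<omega>. X i \<omega> * X j \<omega>)"
begin

definition second_moment :: "nat \<Rightarrow> real" where
  "second_moment m = expectation (\<lambda>\<omega>. (\<Sum>i=1..m. X i \<omega>)\<^sup>2)"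

lemma second_moment_nonneg: "second_moment m \<ge> 0"
  unfolding second_moment_def by simp

lemma second_moment_shift:
  "expectation (\<lambda>\<omega>. (\<Sum>i=k+1..k+m. X i \<omega>)\<^sup>2) = second_moment m"
proof -
  have "expectation (\<lambda>\<omega>. (\<Sum>i=k+1..k+m. X i \<omega>)\<^sup>2)
      = (\<Sum>i=1+k..m+k. \<Sum>j=1+k..m+k. expectation (\<lambda>\<omega>. X i \<omega> * X j \<omega>))"
    by (subst expectation_square_sum) (auto intro: square_integrable_X simp: add.commute)
  also have "\<dots> = (\<Sum>i=1..m. \<Sum>j=1..m. expectation (\<lambda>\<omega>. X (i + k) \<omega> * X (j + k) \<omega>))"
    by (simp only: sum.shift_bounds_cl_nat_ivl)
  also have "\<dots> = (\<Sum>i=1..m. \<Sum>j=1..m. expectation (\<lambda>\<omega>. X i \<omega> * X j \<omega>))"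
    by (intro sum.cong refl stationary) auto
  also have "\<dots> = second_moment m"
    unfolding second_moment_def
    by (subst expectation_square_sum) (auto intro: square_integrable_X)
  finally show ?thesis .
qed

lemma expectation_square_X: "i \<ge> 1 \<Longrightarrow> expectation (\<lambda>\<omega>. (X i \<omega>)\<^sup>2) = second_moment 1"
  using second_moment_shift[of "i - 1" 1] by simp

lemma second_moment_block_bound:
  assumes "m \<ge> 1" "e > 0"
  shows "second_moment n \<le> (1 + e) * ((real (n div m))\<^sup>2 * second_moment m)
    + (1 + 1/e) * ((real (n mod m))\<^sup>2 * second_moment 1)"
proof -
  define q where "q = n div m"
  define r where "r = n mod m"
  define B where "B j \<omega> = (\<Sum>i=j*m+1..j*m+m. X i \<omega>)" for j \<omega>
  define T where "T \<omega> = (\<Sum>j<q. B j \<omega>)" for \<omega>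
  define R where "R \<omega> = (\<Sum>i=q*m+1..q*m+r. X i \<omega>)" for \<omega>
  have split: "(\<Sum>i=1..n. X i \<omega>) = T \<omega> + R \<omega>" for \<omega>
  proof -
    have "n = q*m + r" unfolding q_def r_def by simp
    then have "(\<Sum>i=1..n. X i \<omega>) = (\<Sum>i=1..q*m. X i \<omega>) + R \<omega>"
      unfolding R_def by (simp only:) (rule sum.ub_add_nat, simp)
    then show ?thesis unfolding T_def B_def by (simp only: sum_by_blocks)
  qed
  have B: "square_integrable (B j)" for j
    unfolding B_def by (rule square_integrable_sum) (auto intro: square_integrable_X)
  have T: "square_integrable T"
    unfolding T_def by (rule square_integrable_sum) (auto intro: B)
  have R: "square_integrable R"
    unfolding R_def by (rule square_integrable_sum) (auto intro: square_integrable_X)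
  have "expectation (\<lambda>\<omega>. (T \<omega>)\<^sup>2) \<le> real q * (\<Sum>j<q. expectation (\<lambda>\<omega>. (B j \<omega>)\<^sup>2))"
    unfolding T_def using expectation_square_sum_le[of "{..<q}" B] B by simp
  also have "\<dots> = (real q)\<^sup>2 * second_moment m"
    unfolding B_def using second_moment_shift[of "_ * m" m] by (simp add: power2_eq_square)
  finally have T_bound: "expectation (\<lambda>\<omega>. (T \<omega>)\<^sup>2) \<le> (real q)\<^sup>2 * second_moment m" .
  have "expectation (\<lambda>\<omega>. (R \<omega>)\<^sup>2)
      \<le> real r * (\<Sum>i=q*m+1..q*m+r. expectation (\<lambda>\<omega>. (X i \<omega>)\<^sup>2))"
    unfolding R_def using expectation_square_sum_le[of "{q*m+1..q*m+r}" X] square_integrable_X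
    by simp
  also have "\<dots> = (real r)\<^sup>2 * second_moment 1"
    using expectation_square_X by (simp add: power2_eq_square)
  finally have R_bound: "expectation (\<lambda>\<omega>. (R \<omega>)\<^sup>2) \<le> (real r)\<^sup>2 * second_moment 1" .
  have "second_moment n = expectation (\<lambda>\<omega>. (T \<omega> + R \<omega>)\<^sup>2)"
    unfolding second_moment_def split ..
  also have "\<dots> \<le> (1 + e) * expectation (\<lambda>\<omega>. (T \<omega>)\<^sup>2) + (1 + 1/e) * expectation (\<lambda>\<omega>. (R \<omega>)\<^sup>2)"
    using T R \<open>e > 0\<close> by (rule expectation_square_add_le)
  also have "\<dots> \<le> (1 + e) * ((real q)\<^sup>2 * second_moment m) + (1 + 1/e) * ((real r)\<^sup>2 * second_moment 1)"
    using T_bound R_bound \<open>e > 0\<close> by (intro add_mono mult_left_mono) auto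
  finally show ?thesis unfolding q_def r_def .
qed

end

text \<open>For a centred sequence, \<open>Var(S\<^sub>n) = E[S\<^sub>n\<^sup>2]\<close>; the dichotomy for the normalised
  second moments then gives the theorem.\<close>

theorem mainTheorem6:
  fixes M :: "'a measure" and X :: "nat \<Rightarrow> 'a \<Rightarrow> real"
  assumes "prob_space M"
    and rv: "\<And>i. i \<ge> 1 \<Longrightarrow> X i \<in> borel_measurable M"
    and int: "\<And>i. i \<ge> 1 \<Longrightarrow> integrable M (X i)"
    and sq: "\<And>i. i \<ge> 1 \<Longrightarrow> integrable M (\<lambda>\<omega>. (X i \<omega>)\<^sup>2)"
    and centred: "\<And>i. i \<ge> 1 \<Longrightarrow> prob_space.expectation M (X i) = 0"
    and stationary: "\<And>i j k. i \<ge> 1 \<Longrightarrow> j \<ge> 1 \<Longrightarrow>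
        prob_space.expectation M (\<lambda>\<omega>. X (i + k) \<omega> * X (j + k) \<omega>)
        = prob_space.expectation M (\<lambda>\<omega>. X i \<omega> * X j \<omega>)"
  shows "liminf (\<lambda>n::nat. ereal (prob_space.variance M (\<lambda>\<omega>. \<Sum>i=1..n. X i \<omega>) / (real n)\<^sup>2)) > 0
     \<or> (\<lambda>n::nat. prob_space.variance M (\<lambda>\<omega>. \<Sum>i=1..n. X i \<omega>) / (real n)\<^sup>2) \<longlonglongrightarrow> 0"
proof -
  interpret prob_space M by fact
  interpret weakly_stationary M X
    using rv sq stationary by unfold_locales (auto simp: square_integrable_def)
  have variance_eq: "variance (\<lambda>\<omega>. \<Sum>i=1..n. X i \<omega>) = second_moment n" for n
  proof -
    have "expectation (\<lambda>\<omega>. \<Sum>i=1..n. X i \<omega>) = 0"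
      using int centred by (simp add: Bochner_Integration.integral_sum)
    then show ?thesis unfolding second_moment_def by (rule variance_mean_zero)
  qed
  define v where "v n = second_moment n / (real n)\<^sup>2" for n
  have "liminf (\<lambda>n. ereal (v n)) > 0 \<or> v \<longlonglongrightarrow> 0"
  proof (rule nonneg_sequence_dichotomy)
    show "v n \<ge> 0" for n
      using second_moment_nonneg by (simp add: v_def)
    show "eventually (\<lambda>n. v n \<le> v m + d) sequentially" if "m \<ge> 1" "d > 0" for m d
      unfolding v_def using second_moment_nonneg second_moment_nonneg[of 1] second_moment_block_bound that
      by (rule normalised_eventually_le)
  qed
  then show ?thesis unfolding v_def variance_eq .
qed

end
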